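(* Let $C\in\mathbb{R}^{N\times N}$ be a symmetric positive definite matrix, and let $\{1,\dots,N\}=\mathcal S\cup\mathcal S'$ be a partition into disjoint nonempty sets, with block decomposition $C=\begin{bmatrix} C_{\mathcal S} & C_{\mathcal S\mathcal S'}\\ C_{\mathcal S'\mathcal S} & C_{\mathcal S'}\end{bmatrix}$, where $C_{\mathcal S},C_{\mathcal S'}\succ 0$. For $\lambda>0$ define \[ R_{\mathcal S}(\lambda):=(C_{\mathcal S}+\lambda I)^{-1}-\big[(C+\lambda I)^{-1}\big]_{\mathcal S}, \] where $[M]_{\mathcal S}$ denotes the principal submatrix of $M$ indexed by $\mathcal S$. Define \[ \theta:=\frac{\|C_{\mathcal S\mathcal S'}\|^2}{\lambda_{\min}(C_{\mathcal S})\,\lambda_{\min}(C_{\mathcal S'})}. \] If $\theta<1$, then for all $\lambda>0$, \[ \|R_{\mathcal S}(\lambda)\|\le \frac{\|C_{\mathcal S\mathcal S'}\|^2}{(1-\theta)\,(\lambda_{\min}(C)+\lambda)^3}. \]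
   Context: $\|\cdot\|$ denotes the spectral (operator $2$-) norm and $\lambda_{\min}(\cdot)$ the smallest eigenvalue of a symmetric matrix. $C_{\mathcal S}$, $C_{\mathcal S'}$ are the principal submatrices of $C$ on $\mathcal S$ and $\mathcal S'$, and $C_{\mathcal S\mathcal S'}$ is the submatrix with rows in $\mathcal S$ and columns in $\mathcal S'$. *)

theory Defs
  imports "Jordan_Normal_Form.Char_Poly" "Jordan_Normal_Form.DL_Submatrix"
begin

text \<open>Matrices are JNF matrices with 0-based indices; an N x N matrix has index set {0..<N}.\<close>

definition sym_mat :: "real mat \<Rightarrow> bool" where
  "sym_mat A \<longleftrightarrow> A\<^sup>T = A"

definition pos_def :: "real mat \<Rightarrow> bool" where
  "pos_def A \<longleftrightarrow> A \<in> carrier_mat (dim_row A) (dim_row A) \<and> sym_mat A \<and>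
     (\<forall>x \<in> carrier_vec (dim_row A). x \<noteq> 0\<^sub>v (dim_row A) \<longrightarrow> x \<bullet> (A *\<^sub>v x) > 0)"

definition vnorm :: "real vec \<Rightarrow> real" where
  "vnorm x = sqrt (x \<bullet> x)"

definition spec_norm :: "real mat \<Rightarrow> real" where
  "spec_norm A = Sup {vnorm (A *\<^sub>v x) | x. x \<in> carrier_vec (dim_col A) \<and> vnorm x = 1}"

text \<open>Smallest eigenvalue (of a symmetric matrix, whose eigenvalues are all real).\<close>
definition lambda_min :: "real mat \<Rightarrow> real" where
  "lambda_min A = Min {k. eigenvalue A k}"

definition mat_inv :: "real mat \<Rightarrow> real mat" where
  "mat_inv A = (SOME B. B \<in> carrier_mat (dim_row A) (dim_row A) \<and> inverts_mat A B \<and> inverts_mat B A)"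

abbreviation principal_sub :: "real mat \<Rightarrow> nat set \<Rightarrow> real mat" where
  "principal_sub M S \<equiv> submatrix M S S"

definition R_S :: "real mat \<Rightarrow> nat set \<Rightarrow> real \<Rightarrow> real mat" where
  "R_S C S lam = mat_inv (principal_sub C S + lam \<cdot>\<^sub>m 1\<^sub>m (card S))
      - principal_sub (mat_inv (C + lam \<cdot>\<^sub>m 1\<^sub>m (dim_row C))) S"

end

theory Submission
  imports Defs
begin

text \<open>
  Put \<open>K = C + \<lambda>I\<close> and \<open>c = \<lambda>\<^sub>m\<^sub>i\<^sub>n(C) + \<lambda>\<close>, so that \<open>x\<bullet>Kx \<ge> c |x|\<^sup>2\<close>, and the same holds for
  every principal block of \<open>K\<close>. For \<open>u\<close> on \<open>S\<close> let \<open>z = K\<^sup>-\<^sup>1 u\<close> (with \<open>u\<close> extended by zero) and let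
  \<open>p\<close>, \<open>q\<close> be the parts of \<open>z\<close> on \<open>S\<close> and \<open>S'\<close>. The two block rows of \<open>Kz = u\<close> read
  \<open>u = K\<^sub>S p + K\<^sub>S\<^sub>S\<^sub>' q\<close> and \<open>K\<^sub>S\<^sub>'\<^sub>S p + K\<^sub>S\<^sub>' q = 0\<close>, so \<open>R\<^sub>S u = K\<^sub>S\<^sup>-\<^sup>1 u - p = K\<^sub>S\<^sup>-\<^sup>1 K\<^sub>S\<^sub>S\<^sub>' q\<close>.
  Coercivity turns these identities into \<open>c|p| \<le> |u|\<close>, \<open>c|q| \<le> \<parallel>K\<^sub>S\<^sub>S\<^sub>'\<parallel> |p|\<close> and
  \<open>c|R\<^sub>S u| \<le> \<parallel>K\<^sub>S\<^sub>S\<^sub>'\<parallel> |q|\<close>, whence \<open>\<parallel>R\<^sub>S\<parallel> \<le> \<parallel>C\<^sub>S\<^sub>S\<^sub>'\<parallel>\<^sup>2 / c\<^sup>3\<close>; this is even stronger than the claim,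
  as \<open>0 < 1 - \<theta> \<le> 1\<close>.

  The smallest eigenvalue enters only through the Rayleigh bound \<open>\<lambda>\<^sub>m\<^sub>i\<^sub>n(A)|x|\<^sup>2 \<le> x\<bullet>Ax\<close>. It
  holds because the infimum \<open>\<mu>\<close> of the Rayleigh quotient is an eigenvalue: otherwise the
  positive semidefinite matrix \<open>A - \<mu>I\<close> would be invertible, hence uniformly positive definite.
\<close>

lemma quadratic_nonneg_discriminant:
  fixes a b c :: real
  assumes nonneg: "\<And>t. 0 \<le> a + 2 * t * b + t\<^sup>2 * c" and c: "0 \<le> c"
  shows "b\<^sup>2 \<le> a * c"
proof (cases "c = 0")
  case True
  have "b = 0"
  proof (rule ccontr)
    assume "b \<noteq> 0"
    with nonneg[of "- (a + 1) / (2 * b)"] True show False by (simp add: field_simps)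
  qed
  with True show ?thesis by simp
next
  case False
  with c have "0 < c" by simp
  with nonneg[of "- b / c"] show ?thesis by (simp add: field_simps power2_eq_square)
qed

lemma mult_le_if_mult_square_le:
  fixes a b c :: real
  assumes "0 \<le> a" "0 \<le> b" "c * a\<^sup>2 \<le> a * b"
  shows "c * a \<le> b"
proof (cases "a = 0")
  case False
  with assms show ?thesis by (simp add: power2_eq_square)
qed (use assms in simp)

lemma divide_le_divide_one_minus:
  fixes b c \<theta> :: real
  assumes "0 \<le> b" "0 < c" "0 \<le> \<theta>" "\<theta> < 1"
  shows "b / c \<le> b / ((1 - \<theta>) * c)"
  by (rule divide_left_mono) (use assms in \<open>simp_all add: mult_le_cancel_right1\<close>)

section \<open>Quadratic forms and the spectral norm\<close>

lemma scalar_prod_self_nonneg: "0 \<le> (x :: real vec) \<bullet> x"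
  unfolding scalar_prod_def by (auto intro: sum_nonneg)

lemma scalar_prod_self_pos:
  assumes x: "x \<in> carrier_vec n" and nz: "x \<noteq> 0\<^sub>v n"
  shows "0 < (x :: real vec) \<bullet> x"
proof -
  obtain i where i: "i < n" "x $ i \<noteq> 0"
    using nz x by (metis eq_vecI carrier_vecD index_zero_vec)
  have "0 < (\<Sum>j\<in>{0..<n}. x $ j * x $ j)"
    by (rule sum_pos2[of _ i]) (use i in \<open>auto simp: zero_less_mult_iff linorder_neq_iff\<close>)
  thus ?thesis using x unfolding scalar_prod_def by simp
qed

lemma sym_mat_scalar_prod_swap:
  assumes A: "A \<in> carrier_mat n n" "sym_mat A"
    and x: "x \<in> carrier_vec n" and y: "y \<in> carrier_vec n"
  shows "x \<bullet> (A *\<^sub>v y) = y \<bullet> (A *\<^sub>v x)"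
proof -
  have "x \<bullet> (A *\<^sub>v y) = (A\<^sup>T *\<^sub>v x) \<bullet> y"
    using transpose_vec_mult_scalar[OF A(1) y x] by simp
  also have "\<dots> = y \<bullet> (A *\<^sub>v x)"
    using A x y by (simp add: sym_mat_def comm_scalar_prod[of _ n])
  finally show ?thesis .
qed

lemma quadratic_form_expand:
  assumes A: "A \<in> carrier_mat n n" "sym_mat A"
    and x: "x \<in> carrier_vec n" and y: "y \<in> carrier_vec n"
  shows "(x + t \<cdot>\<^sub>v y) \<bullet> (A *\<^sub>v (x + t \<cdot>\<^sub>v y))
     = x \<bullet> (A *\<^sub>v x) + 2 * t * (x \<bullet> (A *\<^sub>v y)) + t\<^sup>2 * (y \<bullet> (A *\<^sub>v y))"
proof -
  have "A *\<^sub>v (x + t \<cdot>\<^sub>v y) = A *\<^sub>v x + t \<cdot>\<^sub>v (A *\<^sub>v y)"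
    using A x y by (simp add: mult_add_distrib_mat_vec[of A n n] mult_mat_vec)
  hence "(x + t \<cdot>\<^sub>v y) \<bullet> (A *\<^sub>v (x + t \<cdot>\<^sub>v y))
     = x \<bullet> (A *\<^sub>v x) + t * (x \<bullet> (A *\<^sub>v y)) + t * (y \<bullet> (A *\<^sub>v x)) + t\<^sup>2 * (y \<bullet> (A *\<^sub>v y))"
    using A x y by (simp add: add_scalar_prod_distrib[of _ n] scalar_prod_add_distrib[of _ n]
        power2_eq_square algebra_simps)
  thus ?thesis using sym_mat_scalar_prod_swap[OF A x y] by simp
qed

lemma sym_mat_add_smult_one:
  assumes "C \<in> carrier_mat n n" "sym_mat C"
  shows "sym_mat (C + a \<cdot>\<^sub>m 1\<^sub>m n)"
  using assms by (auto simp: sym_mat_def transpose_add[of _ n n])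

lemma quadratic_form_add_smult_one:
  fixes A :: "real mat"
  assumes A: "A \<in> carrier_mat n n" and x: "x \<in> carrier_vec n"
  shows "x \<bullet> ((A + a \<cdot>\<^sub>m 1\<^sub>m n) *\<^sub>v x) = x \<bullet> (A *\<^sub>v x) + a * (x \<bullet> x)"
proof -
  have "(A + a \<cdot>\<^sub>m 1\<^sub>m n) *\<^sub>v x = A *\<^sub>v x + a \<cdot>\<^sub>v x"
    using A x by (auto simp: add_mult_distrib_mat_vec[of A n n])
  with A x show ?thesis by (simp add: scalar_prod_add_distrib[of x n])
qed

lemma psd_cauchy_schwarz:
  assumes A: "A \<in> carrier_mat n n" "sym_mat A"
    and psd: "\<And>z. z \<in> carrier_vec n \<Longrightarrow> 0 \<le> z \<bullet> (A *\<^sub>v z)"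
    and x: "x \<in> carrier_vec n" and y: "y \<in> carrier_vec n"
  shows "(x \<bullet> (A *\<^sub>v y))\<^sup>2 \<le> (x \<bullet> (A *\<^sub>v x)) * (y \<bullet> (A *\<^sub>v y))"
proof (rule quadratic_nonneg_discriminant)
  fix t :: real
  show "0 \<le> x \<bullet> (A *\<^sub>v x) + 2 * t * (x \<bullet> (A *\<^sub>v y)) + t\<^sup>2 * (y \<bullet> (A *\<^sub>v y))"
    using psd[of "x + t \<cdot>\<^sub>v y"] quadratic_form_expand[OF A x y, of t] x y by auto
qed (rule psd[OF y])

lemma cauchy_schwarz_sq:
  assumes "x \<in> carrier_vec n" "y \<in> carrier_vec n"
  shows "(x \<bullet> y)\<^sup>2 \<le> (x \<bullet> x) * ((y :: real vec) \<bullet> y)"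
  using psd_cauchy_schwarz[of "1\<^sub>m n" n x y] assms
  by (simp add: sym_mat_def scalar_prod_self_nonneg)

lemma vnorm_nonneg: "0 \<le> vnorm x"
  unfolding vnorm_def using scalar_prod_self_nonneg[of x] by simp

lemma vnorm_square: "vnorm x ^ 2 = x \<bullet> x"
  unfolding vnorm_def using scalar_prod_self_nonneg by simp

lemma vnorm_smult: "vnorm (a \<cdot>\<^sub>v x) = \<bar>a\<bar> * vnorm x"
proof -
  have "(a \<cdot>\<^sub>v x) \<bullet> (a \<cdot>\<^sub>v x) = a\<^sup>2 * (x \<bullet> x)"
    unfolding scalar_prod_def by (simp add: sum_distrib_left power2_eq_square algebra_simps)
  thus ?thesis unfolding vnorm_def by (simp add: real_sqrt_mult)
qed

lemma vnorm_unit_vec: "i < n \<Longrightarrow> vnorm (unit_vec n i) = 1"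
  unfolding vnorm_def by simp

lemma abs_scalar_prod_le_vnorm:
  assumes "x \<in> carrier_vec n" "y \<in> carrier_vec n"
  shows "\<bar>x \<bullet> y\<bar> \<le> vnorm x * vnorm y"
proof -
  have "sqrt ((x \<bullet> y)\<^sup>2) \<le> sqrt ((x \<bullet> x) * (y \<bullet> y))"
    using cauchy_schwarz_sq[OF assms] by (rule real_sqrt_le_mono)
  thus ?thesis unfolding vnorm_def by (simp add: real_sqrt_mult)
qed

lemma mat_vec_bounded:
  assumes A: "A \<in> carrier_mat nr nc"
  shows "\<exists>K\<ge>0. \<forall>x\<in>carrier_vec nc. vnorm (A *\<^sub>v x) \<le> K * vnorm x"
proof -
  define K2 where "K2 = (\<Sum>i\<in>{0..<nr}. row A i \<bullet> row A i)"
  have K2: "0 \<le> K2" unfolding K2_def by (auto intro: sum_nonneg scalar_prod_self_nonneg)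
  have "vnorm (A *\<^sub>v x) \<le> sqrt K2 * vnorm x" if x: "x \<in> carrier_vec nc" for x
  proof -
    have "(A *\<^sub>v x) \<bullet> (A *\<^sub>v x) = (\<Sum>i\<in>{0..<nr}. (row A i \<bullet> x)\<^sup>2)"
      using A unfolding scalar_prod_def[of "A *\<^sub>v x"] by (simp add: power2_eq_square)
    also have "\<dots> \<le> (\<Sum>i\<in>{0..<nr}. (row A i \<bullet> row A i) * (x \<bullet> x))"
      by (rule sum_mono, rule cauchy_schwarz_sq[of _ nc]) (use A x in auto)
    also have "\<dots> = K2 * (x \<bullet> x)" unfolding K2_def by (simp add: sum_distrib_right)
    finally show ?thesis
      unfolding vnorm_def by (metis real_sqrt_le_mono real_sqrt_mult)
  qed
  with K2 show ?thesis by (intro exI[of _ "sqrt K2"]) auto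
qed

lemma spec_norm_le:
  assumes A: "A \<in> carrier_mat nr nc" and nc: "0 < nc"
    and bound: "\<And>x. x \<in> carrier_vec nc \<Longrightarrow> vnorm x = 1 \<Longrightarrow> vnorm (A *\<^sub>v x) \<le> b"
  shows "spec_norm A \<le> b"
  unfolding spec_norm_def
proof (rule cSup_least)
  show "{vnorm (A *\<^sub>v x) |x. x \<in> carrier_vec (dim_col A) \<and> vnorm x = 1} \<noteq> {}"
    using A nc vnorm_unit_vec[OF nc] by (auto intro!: exI[of _ "unit_vec nc 0"])
qed (use A bound in auto)

lemma vnorm_mult_le_spec_norm:
  assumes A: "A \<in> carrier_mat nr nc" and x: "x \<in> carrier_vec nc"
  shows "vnorm (A *\<^sub>v x) \<le> spec_norm A * vnorm x"
proof -
  obtain K where K: "\<And>x. x \<in> carrier_vec nc \<Longrightarrow> vnorm (A *\<^sub>v x) \<le> K * vnorm x"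
    using mat_vec_bounded[OF A] by auto
  let ?R = "{vnorm (A *\<^sub>v x) |x. x \<in> carrier_vec (dim_col A) \<and> vnorm x = 1}"
  have bdd: "bdd_above ?R"
  proof (rule bdd_aboveI)
    fix t assume "t \<in> ?R"
    then obtain x where "x \<in> carrier_vec nc" "vnorm x = 1" "t = vnorm (A *\<^sub>v x)"
      using A by auto
    with K show "t \<le> K" by (metis mult.right_neutral)
  qed
  show ?thesis
  proof (cases "vnorm x = 0")
    case True
    then show ?thesis using K[OF x] vnorm_nonneg[of "A *\<^sub>v x"] by simp
  next
    case False
    hence pos: "0 < vnorm x" using vnorm_nonneg[of x] by simp
    define u where "u = (1 / vnorm x) \<cdot>\<^sub>v x"
    have u: "u \<in> carrier_vec nc" "vnorm u = 1"
      unfolding u_def using x pos by (auto simp: vnorm_smult)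
    have "vnorm (A *\<^sub>v u) = vnorm (A *\<^sub>v x) / vnorm x"
      unfolding u_def using A x pos by (simp add: mult_mat_vec vnorm_smult)
    moreover have "vnorm (A *\<^sub>v u) \<le> spec_norm A"
      unfolding spec_norm_def by (rule cSup_upper[OF _ bdd]) (use u A in auto)
    ultimately show ?thesis using pos by (simp add: divide_le_eq mult.commute)
  qed
qed

lemma spec_norm_nonneg:
  assumes A: "A \<in> carrier_mat nr nc" and nc: "0 < nc"
  shows "0 \<le> spec_norm A"
proof -
  have "0 \<le> vnorm (A *\<^sub>v unit_vec nc 0)" by (rule vnorm_nonneg)
  also have "\<dots> \<le> spec_norm A" using vnorm_mult_le_spec_norm[OF A, of "unit_vec nc 0"] nc
    by (simp add: vnorm_unit_vec)
  finally show ?thesis .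
qed

lemma mat_inv_inverse:
  assumes A: "A \<in> carrier_mat n n" and d: "det A \<noteq> 0"
  shows "mat_inv A \<in> carrier_mat n n" "A * mat_inv A = 1\<^sub>m n" "mat_inv A * A = 1\<^sub>m n"
proof -
  obtain B where "B \<in> carrier_mat n n" "A * B = 1\<^sub>m n" "B * A = 1\<^sub>m n"
    using det_non_zero_imp_unit[OF A d, of "()"] unfolding Units_def ring_mat_def by auto
  with A have "\<exists>B. B \<in> carrier_mat (dim_row A) (dim_row A) \<and> inverts_mat A B \<and> inverts_mat B A"
    unfolding inverts_mat_def by auto
  from someI_ex[OF this] A
  show "mat_inv A \<in> carrier_mat n n" "A * mat_inv A = 1\<^sub>m n" "mat_inv A * A = 1\<^sub>m n"
    unfolding mat_inv_def inverts_mat_def by auto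
qed

lemma det_nonzero_if_form_bounded:
  fixes A :: "real mat"
  assumes A: "A \<in> carrier_mat n n" and c: "0 < c"
    and bound: "\<And>x. x \<in> carrier_vec n \<Longrightarrow> c * (x \<bullet> x) \<le> x \<bullet> (A *\<^sub>v x)"
  shows "det A \<noteq> 0"
proof
  assume "det A = 0"
  then obtain v where v: "v \<in> carrier_vec n" "v \<noteq> 0\<^sub>v n" "A *\<^sub>v v = 0\<^sub>v n"
    using det_0_iff_vec_prod_zero_field[OF A] by auto
  have "c * (v \<bullet> v) \<le> 0" using bound[OF v(1)] v by simp
  with scalar_prod_self_pos[OF v(1,2)] c show False by (simp add: mult_le_0_iff)
qed

lemma vnorm_le_if_form_bounded:
  assumes A: "A \<in> carrier_mat n n"
    and bound: "\<And>x. x \<in> carrier_vec n \<Longrightarrow> c * (x \<bullet> x) \<le> x \<bullet> (A *\<^sub>v x)"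
    and x: "x \<in> carrier_vec n"
  shows "c * vnorm x \<le> vnorm (A *\<^sub>v x)"
proof -
  have "c * vnorm x ^ 2 \<le> x \<bullet> (A *\<^sub>v x)" using bound[OF x] by (simp add: vnorm_square)
  also have "\<dots> \<le> vnorm x * vnorm (A *\<^sub>v x)"
    using abs_scalar_prod_le_vnorm[OF x, of "A *\<^sub>v x"] A x by auto
  finally show ?thesis by (rule mult_le_if_mult_square_le[OF vnorm_nonneg vnorm_nonneg])
qed

lemma vnorm_mat_inv_le:
  assumes A: "A \<in> carrier_mat n n" and c: "0 < c"
    and bound: "\<And>x. x \<in> carrier_vec n \<Longrightarrow> c * (x \<bullet> x) \<le> x \<bullet> (A *\<^sub>v x)"
    and y: "y \<in> carrier_vec n"
  shows "c * vnorm (mat_inv A *\<^sub>v y) \<le> vnorm y"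
proof -
  note inv = mat_inv_inverse[OF A det_nonzero_if_form_bounded[OF A c bound]]
  have "A *\<^sub>v (mat_inv A *\<^sub>v y) = y"
    using inv A y by (simp flip: assoc_mult_mat_vec[of A n n "mat_inv A" n])
  with vnorm_le_if_form_bounded[OF A bound, of "mat_inv A *\<^sub>v y"] inv y show ?thesis by simp
qed

lemma psd_mult_vec_square_le:
  assumes M: "M \<in> carrier_mat n n" "sym_mat M"
    and psd: "\<And>x. x \<in> carrier_vec n \<Longrightarrow> 0 \<le> x \<bullet> (M *\<^sub>v x)"
    and K: "0 \<le> K" "\<And>y. y \<in> carrier_vec n \<Longrightarrow> vnorm (M *\<^sub>v y) \<le> K * vnorm y"
    and x: "x \<in> carrier_vec n"
  shows "(M *\<^sub>v x) \<bullet> (M *\<^sub>v x) \<le> K * (x \<bullet> (M *\<^sub>v x))"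
proof -
  define y where "y = M *\<^sub>v x"
  have y: "y \<in> carrier_vec n" unfolding y_def using M x by simp
  have "y \<bullet> (M *\<^sub>v y) \<le> vnorm y * vnorm (M *\<^sub>v y)"
    using abs_scalar_prod_le_vnorm[OF y, of "M *\<^sub>v y"] M y by auto
  also have "\<dots> \<le> vnorm y * (K * vnorm y)"
    using K(2)[OF y] vnorm_nonneg[of y] by (rule mult_left_mono)
  finally have "y \<bullet> (M *\<^sub>v y) \<le> K * (y \<bullet> y)"
    by (simp add: vnorm_square[symmetric] power2_eq_square algebra_simps)
  hence "(y \<bullet> (M *\<^sub>v y)) * (x \<bullet> (M *\<^sub>v x)) \<le> K * (y \<bullet> y) * (x \<bullet> (M *\<^sub>v x))"
    using psd[OF x] by (rule mult_right_mono)
  moreover have "(y \<bullet> y)\<^sup>2 \<le> (y \<bullet> (M *\<^sub>v y)) * (x \<bullet> (M *\<^sub>v x))"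
    using psd_cauchy_schwarz[OF M psd y x] unfolding y_def by (simp add: mult.commute)
  ultimately have "1 * (y \<bullet> y)\<^sup>2 \<le> (y \<bullet> y) * (K * (x \<bullet> (M *\<^sub>v x)))"
    by (simp add: algebra_simps)
  hence "1 * (y \<bullet> y) \<le> K * (x \<bullet> (M *\<^sub>v x))"
    by (rule mult_le_if_mult_square_le[OF scalar_prod_self_nonneg
          mult_nonneg_nonneg[OF K(1) psd[OF x]]])
  thus ?thesis unfolding y_def by simp
qed

lemma psd_invertible_form_bounded:
  assumes M: "M \<in> carrier_mat n n" "sym_mat M"
    and psd: "\<And>x. x \<in> carrier_vec n \<Longrightarrow> 0 \<le> x \<bullet> (M *\<^sub>v x)"
    and d: "det M \<noteq> 0"
  shows "\<exists>\<epsilon>>0. \<forall>x\<in>carrier_vec n. \<epsilon> * (x \<bullet> x) \<le> x \<bullet> (M *\<^sub>v x)"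
proof -
  note inv = mat_inv_inverse[OF M(1) d]
  obtain K1 where K1: "\<And>y. y \<in> carrier_vec n \<Longrightarrow> vnorm (mat_inv M *\<^sub>v y) \<le> K1 * vnorm y"
    using mat_vec_bounded[OF inv(1)] by auto
  obtain K2 where K2: "0 \<le> K2" "\<And>y. y \<in> carrier_vec n \<Longrightarrow> vnorm (M *\<^sub>v y) \<le> K2 * vnorm y"
    using mat_vec_bounded[OF M(1)] by auto
  define K where "K = K1\<^sup>2 * K2"
  have K: "0 \<le> K" unfolding K_def using K2(1) by simp
  have "1 / (K + 1) * (x \<bullet> x) \<le> x \<bullet> (M *\<^sub>v x)" if x: "x \<in> carrier_vec n" for x
  proof -
    let ?y = "M *\<^sub>v x"
    have "mat_inv M *\<^sub>v ?y = x"
      using inv M x by (simp flip: assoc_mult_mat_vec[of _ n n M n])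
    hence "vnorm x ^ 2 \<le> (K1 * vnorm ?y)\<^sup>2"
      using K1[of ?y] M x vnorm_nonneg[of x] by (simp add: power_mono)
    hence "x \<bullet> x \<le> K1\<^sup>2 * (?y \<bullet> ?y)" by (simp add: vnorm_square power_mult_distrib)
    also have "\<dots> \<le> K1\<^sup>2 * (K2 * (x \<bullet> (M *\<^sub>v x)))"
      by (simp add: mult_left_mono psd_mult_vec_square_le[OF M psd K2 x])
    also have "\<dots> \<le> (K + 1) * (x \<bullet> (M *\<^sub>v x))"
      using psd[OF x] unfolding K_def by (simp add: algebra_simps)
    finally show ?thesis using K by (simp add: field_simps)
  qed
  with K show ?thesis by (intro exI[of _ "1 / (K + 1)"]) auto
qed

section \<open>The smallest eigenvalue as a Rayleigh minimum\<close>

lemma form_bound_if_unit_bound: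
  fixes A :: "real mat"
  assumes A: "A \<in> carrier_mat n n"
    and unit: "\<And>x. x \<in> carrier_vec n \<Longrightarrow> x \<bullet> x = 1 \<Longrightarrow> \<mu> \<le> x \<bullet> (A *\<^sub>v x)"
    and x: "x \<in> carrier_vec n"
  shows "\<mu> * (x \<bullet> x) \<le> x \<bullet> (A *\<^sub>v x)"
proof (cases "x = 0\<^sub>v n")
  case True
  with A show ?thesis by simp
next
  case False
  with scalar_prod_self_pos[OF x] have pos: "0 < x \<bullet> x" by simp
  define u where "u = (1 / vnorm x) \<cdot>\<^sub>v x"
  have "(1 / vnorm x)\<^sup>2 = 1 / (x \<bullet> x)"
    using pos by (simp add: power_divide vnorm_square)
  with x A pos have "u \<bullet> u = 1" and uAu: "u \<bullet> (A *\<^sub>v u) = (x \<bullet> (A *\<^sub>v x)) / (x \<bullet> x)"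
    unfolding u_def by (simp_all add: mult_mat_vec power2_eq_square)
  with unit[of u] x have "\<mu> \<le> (x \<bullet> (A *\<^sub>v x)) / (x \<bullet> x)" unfolding u_def by simp
  with pos show ?thesis by (simp add: le_divide_eq)
qed

lemma eigenvalue_ge_if_form_bounded:
  fixes A :: "real mat"
  assumes A: "A \<in> carrier_mat n n"
    and bound: "\<And>x. x \<in> carrier_vec n \<Longrightarrow> \<mu> * (x \<bullet> x) \<le> x \<bullet> (A *\<^sub>v x)"
    and k: "eigenvalue A k"
  shows "\<mu> \<le> k"
proof -
  obtain v where "eigenvector A v k" using k unfolding eigenvalue_def by auto
  hence v: "v \<in> carrier_vec n" "v \<noteq> 0\<^sub>v n" "A *\<^sub>v v = k \<cdot>\<^sub>v v"
    using A unfolding eigenvector_def by auto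
  have "\<mu> * (v \<bullet> v) \<le> k * (v \<bullet> v)" using bound[OF v(1)] v by simp
  with scalar_prod_self_pos[OF v(1,2)] show ?thesis by simp
qed

lemma eigenvalue_pos_if_pos_def:
  assumes A: "A \<in> carrier_mat n n" "pos_def A" and k: "eigenvalue A k"
  shows "0 < k"
proof -
  obtain v where "eigenvector A v k" using k unfolding eigenvalue_def by auto
  hence v: "v \<in> carrier_vec n" "v \<noteq> 0\<^sub>v n" "A *\<^sub>v v = k \<cdot>\<^sub>v v"
    using A unfolding eigenvector_def by auto
  have "0 < k * (v \<bullet> v)" using A v unfolding pos_def_def by auto
  with scalar_prod_self_nonneg[of v] show ?thesis by (simp add: zero_less_mult_iff)
qed

lemma finite_eigenvalues:
  fixes A :: "real mat"
  assumes A: "A \<in> carrier_mat n n"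
  shows "finite {k. eigenvalue A k}"
proof -
  have "char_poly A \<noteq> 0" using degree_monic_char_poly[OF A] by auto
  hence "finite {k. poly (char_poly A) k = 0}" by (rule poly_roots_finite)
  thus ?thesis using eigenvalue_root_char_poly[OF A] by simp
qed

lemma eigenvalue_if_sharp_form_bound:
  assumes A: "A \<in> carrier_mat n n" "sym_mat A"
    and bound: "\<And>x. x \<in> carrier_vec n \<Longrightarrow> \<mu> * (x \<bullet> x) \<le> x \<bullet> (A *\<^sub>v x)"
    and sharp: "\<not> (\<exists>\<epsilon>>0. \<forall>x\<in>carrier_vec n. (\<mu> + \<epsilon>) * (x \<bullet> x) \<le> x \<bullet> (A *\<^sub>v x))"
  shows "eigenvalue A \<mu>"
proof -
  define M where "M = char_matrix A \<mu>"
  have M: "M \<in> carrier_mat n n" "sym_mat M"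
    using A sym_mat_add_smult_one[OF A] unfolding M_def char_matrix_def by simp_all
  have xMx: "x \<bullet> (M *\<^sub>v x) = x \<bullet> (A *\<^sub>v x) - \<mu> * (x \<bullet> x)" if "x \<in> carrier_vec n" for x
    using quadratic_form_add_smult_one[OF A(1) that] A unfolding M_def char_matrix_def by simp
  have "det M = 0"
  proof (rule ccontr)
    assume "det M \<noteq> 0"
    with psd_invertible_form_bounded[OF M] bound xMx
    obtain \<epsilon> where \<epsilon>: "0 < \<epsilon>" "\<forall>x\<in>carrier_vec n. \<epsilon> * (x \<bullet> x) \<le> x \<bullet> (M *\<^sub>v x)"
      by fastforce
    have "(\<mu> + \<epsilon>) * (x \<bullet> x) \<le> x \<bullet> (A *\<^sub>v x)" if "x \<in> carrier_vec n" for x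
      using \<epsilon>(2) xMx[OF that] that by (auto simp: algebra_simps)
    with \<epsilon>(1) sharp show False by blast
  qed
  thus ?thesis unfolding eigenvalue_det[OF A(1)] M_def .
qed

lemma lambda_min_form_bound:
  assumes A: "A \<in> carrier_mat n n" "sym_mat A" and n: "0 < n"
  shows "eigenvalue A (lambda_min A)"
    and "\<And>x. x \<in> carrier_vec n \<Longrightarrow> lambda_min A * (x \<bullet> x) \<le> x \<bullet> (A *\<^sub>v x)"
proof -
  define Q where "Q = {x \<bullet> (A *\<^sub>v x) | x. x \<in> carrier_vec n \<and> x \<bullet> x = 1}"
  define \<mu> where "\<mu> = Inf Q"
  have "Q \<noteq> {}" unfolding Q_def using n by (auto intro!: exI[of _ "unit_vec n 0"])
  obtain K where K: "\<And>x. x \<in> carrier_vec n \<Longrightarrow> vnorm (A *\<^sub>v x) \<le> K * vnorm x"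
    using mat_vec_bounded[OF A(1)] by auto
  have "bdd_below Q"
  proof (rule bdd_belowI)
    fix t assume "t \<in> Q"
    then obtain x where x: "x \<in> carrier_vec n" "x \<bullet> x = 1" "t = x \<bullet> (A *\<^sub>v x)"
      unfolding Q_def by auto
    hence "vnorm x = 1" unfolding vnorm_def by simp
    with x K[OF x(1)] abs_scalar_prod_le_vnorm[OF x(1), of "A *\<^sub>v x"] A
    show "- K \<le> t" by auto
  qed
  have bound: "\<mu> * (x \<bullet> x) \<le> x \<bullet> (A *\<^sub>v x)" if "x \<in> carrier_vec n" for x
    using form_bound_if_unit_bound[OF A(1) _ that] cInf_lower[OF _ \<open>bdd_below Q\<close>]
    unfolding \<mu>_def Q_def by blast
  have sharp: "\<not> (\<exists>\<epsilon>>0. \<forall>x\<in>carrier_vec n. (\<mu> + \<epsilon>) * (x \<bullet> x) \<le> x \<bullet> (A *\<^sub>v x))"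
  proof
    assume "\<exists>\<epsilon>>0. \<forall>x\<in>carrier_vec n. (\<mu> + \<epsilon>) * (x \<bullet> x) \<le> x \<bullet> (A *\<^sub>v x)"
    then obtain \<epsilon> where "0 < \<epsilon>" "\<forall>x\<in>carrier_vec n. (\<mu> + \<epsilon>) * (x \<bullet> x) \<le> x \<bullet> (A *\<^sub>v x)"
      by blast
    moreover from this have "\<mu> + \<epsilon> \<le> Inf Q"
      by (intro cInf_greatest[OF \<open>Q \<noteq> {}\<close>]) (auto simp: Q_def)
    ultimately show False unfolding \<mu>_def by simp
  qed
  have ev: "eigenvalue A \<mu>" by (rule eigenvalue_if_sharp_form_bound[OF A bound sharp])
  have "lambda_min A = \<mu>"
    unfolding lambda_min_def
    by (rule Min_eqI[OF finite_eigenvalues[OF A(1)]])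
      (use ev eigenvalue_ge_if_form_bounded[OF A(1) bound] in auto)
  with ev bound show "eigenvalue A (lambda_min A)"
    and "\<And>x. x \<in> carrier_vec n \<Longrightarrow> lambda_min A * (x \<bullet> x) \<le> x \<bullet> (A *\<^sub>v x)"
    by simp_all
qed

lemma lambda_min_shift_form_bound:
  assumes C: "C \<in> carrier_mat n n" "sym_mat C" and n: "0 < n" and x: "x \<in> carrier_vec n"
  shows "(lambda_min C + a) * (x \<bullet> x) \<le> x \<bullet> ((C + a \<cdot>\<^sub>m 1\<^sub>m n) *\<^sub>v x)"
  using lambda_min_form_bound(2)[OF C n x] quadratic_form_add_smult_one[OF C(1) x]
  by (simp add: algebra_simps)

lemma lambda_min_pos:
  assumes A: "A \<in> carrier_mat n n" "pos_def A" and n: "0 < n"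
  shows "0 < lambda_min A"
  using A lambda_min_form_bound(1)[OF A(1) _ n] unfolding pos_def_def
  by (intro eigenvalue_pos_if_pos_def[OF A]) auto

section \<open>Vectors and submatrices on index sets\<close>

text \<open>
  Vectors indexed by a subset \<open>I\<close> of \<open>{0..<n}\<close> are stored with the indices of \<open>I\<close> renumbered
  increasingly, as in \<^const>\<open>submatrix\<close>: the \<open>k\<close>-th entry belongs to \<open>pick I k\<close>.
\<close>

definition extend_vec :: "nat set \<Rightarrow> nat \<Rightarrow> real vec \<Rightarrow> real vec" where
  "extend_vec I n u = vec n (\<lambda>i. if i \<in> I then u $ card {a\<in>I. a < i} else 0)"

definition restrict_vec :: "nat set \<Rightarrow> real vec \<Rightarrow> real vec" where
  "restrict_vec I z = vec (card I) (\<lambda>k. z $ pick I k)"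

lemma extend_vec_carrier [simp]: "extend_vec I n u \<in> carrier_vec n"
  unfolding extend_vec_def by simp

lemma restrict_vec_carrier [simp]: "restrict_vec I z \<in> carrier_vec (card I)"
  unfolding restrict_vec_def by simp

lemma dim_extend_vec [simp]: "dim_vec (extend_vec I n u) = n"
  unfolding extend_vec_def by simp

lemma dim_restrict_vec [simp]: "dim_vec (restrict_vec I z) = card I"
  unfolding restrict_vec_def by simp

lemma card_less_in_set:
  assumes "finite (I :: nat set)" "i \<in> I"
  shows "card {a\<in>I. a < i} < card I"
  using assms by (intro psubset_card_mono) auto

lemma sum_pick:
  assumes "finite I"
  shows "(\<Sum>k\<in>{0..<card I}. f (pick I k)) = (\<Sum>i\<in>I. f i)"
proof (rule sum.reindex_bij_witness[of _ "\<lambda>i. card {a\<in>I. a < i}" "pick I"])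
  fix k assume "k \<in> {0..<card I}"
  then show "card {a\<in>I. a < pick I k} = k" "pick I k \<in> I"
    using card_pick pick_in_set by auto
next
  fix i assume "i \<in> I"
  then show "pick I (card {a\<in>I. a < i}) = i" "card {a\<in>I. a < i} \<in> {0..<card I}"
    using pick_card_in_set card_less_in_set[OF assms] by auto
qed simp

lemma restrict_extend_vec:
  assumes I: "I \<subseteq> {0..<n}" and u: "u \<in> carrier_vec (card I)"
  shows "restrict_vec I (extend_vec I n u) = u"
proof (rule eq_vecI)
  fix k assume "k < dim_vec u"
  with u have k: "k < card I" by simp
  hence "pick I k \<in> I" using pick_in_set by auto
  with I k show "restrict_vec I (extend_vec I n u) $ k = u $ k"
    unfolding restrict_vec_def extend_vec_def using card_pick[of k I] by auto
qed (use u in auto)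

lemma restrict_extend_vec_disjoint:
  assumes J: "J \<subseteq> {0..<n}" and disj: "I \<inter> J = {}"
  shows "restrict_vec J (extend_vec I n u) = 0\<^sub>v (card J)"
proof (rule eq_vecI)
  fix k assume "k < dim_vec (0\<^sub>v (card J))"
  hence k: "k < card J" by simp
  hence "pick J k \<in> J" using pick_in_set by auto
  with J disj have "pick J k < n" "pick J k \<notin> I" by auto
  with k show "restrict_vec J (extend_vec I n u) $ k = 0\<^sub>v (card J) $ k"
    unfolding restrict_vec_def extend_vec_def by simp
qed auto

lemma restrict_vec_add:
  assumes "dim_vec x = dim_vec y" and I: "I \<subseteq> {0..<dim_vec y}"
  shows "restrict_vec I (x + y) = restrict_vec I x + restrict_vec I y"
proof (rule eq_vecI)
  fix k assume "k < dim_vec (restrict_vec I x + restrict_vec I y)"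
  hence k: "k < card I" by simp
  hence "pick I k < dim_vec y" using pick_in_set[of k I] I by auto
  with k assms show "restrict_vec I (x + y) $ k = (restrict_vec I x + restrict_vec I y) $ k"
    unfolding restrict_vec_def by simp
qed simp

lemma sum_extend_vec:
  assumes I: "I \<subseteq> {0..<n}"
  shows "(\<Sum>i\<in>{0..<n}. f i * extend_vec I n u $ i) = (\<Sum>k\<in>{0..<card I}. f (pick I k) * u $ k)"
proof -
  have fin: "finite I" using I finite_subset by blast
  have "(\<Sum>i\<in>{0..<n}. f i * extend_vec I n u $ i)
      = (\<Sum>i\<in>{0..<n}. if i \<in> I then f i * u $ card {a\<in>I. a < i} else 0)"
    unfolding extend_vec_def by (rule sum.cong) auto
  also have "\<dots> = (\<Sum>i\<in>I. f i * u $ card {a\<in>I. a < i})"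
    using I by (simp add: sum.If_cases Int_absorb1)
  also have "\<dots> = (\<Sum>k\<in>{0..<card I}. f (pick I k) * u $ card {a\<in>I. a < pick I k})"
    using sum_pick[OF fin, of "\<lambda>i. f i * u $ card {a\<in>I. a < i}"] by simp
  also have "\<dots> = (\<Sum>k\<in>{0..<card I}. f (pick I k) * u $ k)"
    by (rule sum.cong) (auto simp: card_pick)
  finally show ?thesis .
qed

lemma scalar_prod_extend_vec:
  assumes I: "I \<subseteq> {0..<n}" and z: "z \<in> carrier_vec n"
  shows "extend_vec I n x \<bullet> z = x \<bullet> restrict_vec I z"
proof -
  have "extend_vec I n x \<bullet> z = (\<Sum>i\<in>{0..<n}. z $ i * extend_vec I n x $ i)"
    using z unfolding scalar_prod_def by (simp add: mult.commute)
  also have "\<dots> = (\<Sum>k\<in>{0..<card I}. z $ pick I k * x $ k)" by (rule sum_extend_vec[OF I])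
  also have "\<dots> = x \<bullet> restrict_vec I z"
    unfolding scalar_prod_def restrict_vec_def by (simp add: mult.commute)
  finally show ?thesis .
qed

lemma scalar_prod_extend_extend_vec:
  assumes I: "I \<subseteq> {0..<n}" and y: "y \<in> carrier_vec (card I)"
  shows "extend_vec I n x \<bullet> extend_vec I n y = x \<bullet> y"
  using scalar_prod_extend_vec[OF I, of "extend_vec I n y" x] restrict_extend_vec[OF I y] by simp

lemma restrict_vec_scalar_prod_le:
  assumes I: "I \<subseteq> {0..<n}" and z: "z \<in> carrier_vec n"
  shows "restrict_vec I z \<bullet> restrict_vec I z \<le> z \<bullet> z"
proof -
  have fin: "finite I" using I finite_subset by blast
  have "restrict_vec I z \<bullet> restrict_vec I z = (\<Sum>k\<in>{0..<card I}. z $ pick I k * z $ pick I k)"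
    unfolding scalar_prod_def restrict_vec_def by simp
  also have "\<dots> = (\<Sum>i\<in>I. z $ i * z $ i)" by (rule sum_pick[OF fin])
  also have "\<dots> \<le> (\<Sum>i\<in>{0..<n}. z $ i * z $ i)" by (rule sum_mono2) (use I in auto)
  also have "\<dots> = z \<bullet> z" using z unfolding scalar_prod_def by simp
  finally show ?thesis .
qed

lemma vec_eq_extend_restrict:
  assumes part: "S \<union> S' = {0..<n}" "S \<inter> S' = {}" and z: "z \<in> carrier_vec n"
  shows "z = extend_vec S n (restrict_vec S z) + extend_vec S' n (restrict_vec S' z)"
proof (rule eq_vecI)
  fix i assume "i < dim_vec (extend_vec S n (restrict_vec S z) + extend_vec S' n (restrict_vec S' z))"
  hence i: "i < n" by simp
  have fin: "finite S" "finite S'" using part(1) by (metis finite_Un finite_atLeastLessThan)+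
  show "z $ i = (extend_vec S n (restrict_vec S z) + extend_vec S' n (restrict_vec S' z)) $ i"
  proof (cases "i \<in> S")
    case True
    with part(2) have "i \<notin> S'" by auto
    with True i show ?thesis
      using card_less_in_set[OF fin(1) True] pick_card_in_set[OF True]
      unfolding extend_vec_def restrict_vec_def by simp
  next
    case False
    with part(1) i have T: "i \<in> S'" by auto
    with False i show ?thesis
      using card_less_in_set[OF fin(2) T] pick_card_in_set[OF T]
      unfolding extend_vec_def restrict_vec_def by simp
  qed
qed (use z in simp)

lemma Collect_less_mem_eq: "I \<subseteq> {0..<n} \<Longrightarrow> {i. i < n \<and> i \<in> I} = I"
  by auto

lemma submatrix_carrier_mat:
  assumes M: "M \<in> carrier_mat n n" and I: "I \<subseteq> {0..<n}" and J: "J \<subseteq> {0..<n}"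
  shows "submatrix M I J \<in> carrier_mat (card I) (card J)"
  using M Collect_less_mem_eq[OF I] Collect_less_mem_eq[OF J]
  unfolding submatrix_def by auto

lemma submatrix_mult_vec:
  assumes M: "M \<in> carrier_mat n n" and I: "I \<subseteq> {0..<n}" and J: "J \<subseteq> {0..<n}"
    and q: "q \<in> carrier_vec (card J)"
  shows "submatrix M I J *\<^sub>v q = restrict_vec I (M *\<^sub>v extend_vec J n q)"
proof (rule eq_vecI)
  have sm: "submatrix M I J \<in> carrier_mat (card I) (card J)"
    by (rule submatrix_carrier_mat[OF M I J])
  then show "dim_vec (submatrix M I J *\<^sub>v q) = dim_vec (restrict_vec I (M *\<^sub>v extend_vec J n q))"
    by simp
  fix k assume "k < dim_vec (restrict_vec I (M *\<^sub>v extend_vec J n q))"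
  hence k: "k < card I" by simp
  have p: "pick I k < n" using pick_in_set[of k I] k I by auto
  have "restrict_vec I (M *\<^sub>v extend_vec J n q) $ k
      = (\<Sum>i\<in>{0..<n}. M $$ (pick I k, i) * extend_vec J n q $ i)"
    unfolding restrict_vec_def using k p M by (simp add: scalar_prod_def row_def)
  also have "\<dots> = (\<Sum>j\<in>{0..<card J}. M $$ (pick I k, pick J j) * q $ j)"
    by (rule sum_extend_vec[OF J])
  also have "\<dots> = (submatrix M I J *\<^sub>v q) $ k"
    using sm k q M
    by (simp add: scalar_prod_def row_def submatrix_index[of k M I, symmetric]
        Collect_less_mem_eq[OF I] Collect_less_mem_eq[OF J])
  finally show "(submatrix M I J *\<^sub>v q) $ k = restrict_vec I (M *\<^sub>v extend_vec J n q) $ k"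
    by simp
qed

lemma restrict_mult_mat_vec_blocks:
  assumes K: "K \<in> carrier_mat n n" and part: "S \<union> S' = {0..<n}" "S \<inter> S' = {}"
    and I: "I \<subseteq> {0..<n}" and z: "z \<in> carrier_vec n"
  shows "restrict_vec I (K *\<^sub>v z)
    = submatrix K I S *\<^sub>v restrict_vec S z + submatrix K I S' *\<^sub>v restrict_vec S' z"
proof -
  have SN: "S \<subseteq> {0..<n}" "S' \<subseteq> {0..<n}" using part(1) by auto
  have "K *\<^sub>v z = K *\<^sub>v (extend_vec S n (restrict_vec S z) + extend_vec S' n (restrict_vec S' z))"
    using vec_eq_extend_restrict[OF part z] by (rule arg_cong)
  also have "\<dots> = K *\<^sub>v extend_vec S n (restrict_vec S z) + K *\<^sub>v extend_vec S' n (restrict_vec S' z)"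
    by (rule mult_add_distrib_mat_vec[OF K]) auto
  finally show ?thesis
    using K I SN by (simp add: restrict_vec_add submatrix_mult_vec)
qed

lemma submatrix_scalar_prod_swap:
  assumes K: "K \<in> carrier_mat n n" "sym_mat K" and I: "I \<subseteq> {0..<n}" and J: "J \<subseteq> {0..<n}"
    and p: "p \<in> carrier_vec (card I)" and q: "q \<in> carrier_vec (card J)"
  shows "q \<bullet> (submatrix K J I *\<^sub>v p) = p \<bullet> (submatrix K I J *\<^sub>v q)"
proof -
  have "q \<bullet> (submatrix K J I *\<^sub>v p) = extend_vec J n q \<bullet> (K *\<^sub>v extend_vec I n p)"
    using submatrix_mult_vec[OF K(1) J I p] scalar_prod_extend_vec[OF J, of _ q] K by simp
  also have "\<dots> = extend_vec I n p \<bullet> (K *\<^sub>v extend_vec J n q)"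
    by (rule sym_mat_scalar_prod_swap[OF K]) auto
  also have "\<dots> = p \<bullet> (submatrix K I J *\<^sub>v q)"
    using submatrix_mult_vec[OF K(1) I J q] scalar_prod_extend_vec[OF I, of _ p] K by simp
  finally show ?thesis .
qed

lemma principal_sub_form_bound:
  assumes K: "K \<in> carrier_mat n n" and I: "I \<subseteq> {0..<n}"
    and bound: "\<And>x. x \<in> carrier_vec n \<Longrightarrow> c * (x \<bullet> x) \<le> x \<bullet> (K *\<^sub>v x)"
    and h: "h \<in> carrier_vec (card I)"
  shows "c * (h \<bullet> h) \<le> h \<bullet> (principal_sub K I *\<^sub>v h)"
proof -
  have "h \<bullet> (principal_sub K I *\<^sub>v h) = extend_vec I n h \<bullet> (K *\<^sub>v extend_vec I n h)"
    using submatrix_mult_vec[OF K I I h] scalar_prod_extend_vec[OF I, of _ h] K by simp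
  with bound[OF extend_vec_carrier[of I n h]] scalar_prod_extend_extend_vec[OF I h]
  show ?thesis by simp
qed

lemma pick_inj:
  assumes "i < card I" "j < card I" "pick I i = pick I j"
  shows "i = j"
  by (metis assms card_pick)

lemma submatrix_add_smult_one:
  fixes C :: "real mat"
  assumes C: "C \<in> carrier_mat n n" and I: "I \<subseteq> {0..<n}" and J: "J \<subseteq> {0..<n}"
  shows "submatrix (C + a \<cdot>\<^sub>m 1\<^sub>m n) I J
    = submatrix C I J + mat (card I) (card J) (\<lambda>(i, j). if pick I i = pick J j then a else 0)"
    (is "?L = ?R")
proof (rule eq_matI)
  fix i j assume "i < dim_row ?R" "j < dim_col ?R"
  hence ij: "i < card I" "j < card J" by auto
  hence "pick I i < n" "pick J j < n" using pick_in_set[of i I] pick_in_set[of j J] I J by auto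
  with ij C show "?L $$ (i, j) = ?R $$ (i, j)"
    by (simp add: submatrix_index Collect_less_mem_eq[OF I] Collect_less_mem_eq[OF J])
qed (use C I J in \<open>simp_all add: dim_submatrix Collect_less_mem_eq\<close>)

lemma principal_sub_add_smult_one:
  assumes C: "C \<in> carrier_mat n n" and I: "I \<subseteq> {0..<n}"
  shows "principal_sub (C + a \<cdot>\<^sub>m 1\<^sub>m n) I = principal_sub C I + a \<cdot>\<^sub>m 1\<^sub>m (card I)"
  using submatrix_add_smult_one[OF C I I] pick_inj by (auto intro!: arg_cong2[where f = "(+)"])

lemma submatrix_add_smult_one_disjoint:
  fixes C :: "real mat"
  assumes C: "C \<in> carrier_mat n n" and I: "I \<subseteq> {0..<n}" and J: "J \<subseteq> {0..<n}"
    and disj: "I \<inter> J = {}"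
  shows "submatrix (C + a \<cdot>\<^sub>m 1\<^sub>m n) I J = submatrix C I J"
proof -
  have "mat (card I) (card J) (\<lambda>(i, j). if pick I i = pick J j then a else 0) = 0\<^sub>m (card I) (card J)"
    (is "?D = ?Z")
  proof (rule eq_matI)
    fix i j assume ij: "i < dim_row ?Z" "j < dim_col ?Z"
    hence "pick I i \<in> I" "pick J j \<in> J" using pick_in_set[of i I] pick_in_set[of j J] by auto
    with disj ij show "?D $$ (i, j) = ?Z $$ (i, j)" by auto
  qed auto
  with submatrix_add_smult_one[OF C I J] submatrix_carrier_mat[OF C I J] show ?thesis by simp
qed

lemma R_S_eq:
  assumes C: "C \<in> carrier_mat n n" and S: "S \<subseteq> {0..<n}"
  shows "R_S C S a = mat_inv (principal_sub (C + a \<cdot>\<^sub>m 1\<^sub>m n) S)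
    - principal_sub (mat_inv (C + a \<cdot>\<^sub>m 1\<^sub>m n)) S"
  unfolding R_S_def using C principal_sub_add_smult_one[OF C S] by simp

section \<open>Principal blocks of the inverse\<close>

locale form_bounded_partition =
  fixes K :: "real mat" and n :: nat and c :: real and S S' :: "nat set"
  assumes K_carrier: "K \<in> carrier_mat n n" and K_sym: "sym_mat K"
    and c_pos: "0 < c"
    and K_bound: "\<And>x. x \<in> carrier_vec n \<Longrightarrow> c * (x \<bullet> x) \<le> x \<bullet> (K *\<^sub>v x)"
    and union: "S \<union> S' = {0..<n}" and disjoint: "S \<inter> S' = {}"
    and nonempty: "S \<noteq> {}" "S' \<noteq> {}"
begin

lemma S_subset: "S \<subseteq> {0..<n}" and S'_subset: "S' \<subseteq> {0..<n}"
  using union by auto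

lemma card_S_pos: "0 < card S" and card_S'_pos: "0 < card S'"
  using S_subset S'_subset nonempty by (meson card_gt_0_iff finite_atLeastLessThan finite_subset)+

lemma vnorm_restrict_le:
  assumes z: "z \<in> carrier_vec n" and u: "u \<in> carrier_vec (card S)"
    and Kz: "K *\<^sub>v z = extend_vec S n u"
  shows "c * vnorm (restrict_vec S z) \<le> vnorm u"
proof -
  let ?p = "restrict_vec S z"
  have "c * vnorm ?p ^ 2 \<le> c * (z \<bullet> z)"
    using restrict_vec_scalar_prod_le[OF S_subset z] c_pos by (simp add: vnorm_square)
  also have "\<dots> \<le> z \<bullet> (K *\<^sub>v z)" by (rule K_bound[OF z])
  also have "\<dots> = u \<bullet> ?p"
    unfolding Kz using comm_scalar_prod[OF z] scalar_prod_extend_vec[OF S_subset z] by simp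
  also have "\<dots> \<le> vnorm ?p * vnorm u"
    using abs_scalar_prod_le_vnorm[OF u restrict_vec_carrier[of S z]]
    by (simp add: abs_le_iff mult.commute)
  finally show ?thesis by (rule mult_le_if_mult_square_le[OF vnorm_nonneg vnorm_nonneg])
qed

lemma vnorm_restrict_complement_le:
  assumes z: "z \<in> carrier_vec n" and Kz: "restrict_vec S' (K *\<^sub>v z) = 0\<^sub>v (card S')"
  shows "c * vnorm (restrict_vec S' z) \<le> spec_norm (submatrix K S S') * vnorm (restrict_vec S z)"
proof -
  let ?p = "restrict_vec S z" and ?q = "restrict_vec S' z" and ?B = "submatrix K S S'"
  have B: "?B \<in> carrier_mat (card S) (card S')"
    by (rule submatrix_carrier_mat[OF K_carrier S_subset S'_subset])
  have "submatrix K S' S *\<^sub>v ?p + principal_sub K S' *\<^sub>v ?q = 0\<^sub>v (card S')"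
    using restrict_mult_mat_vec_blocks[OF K_carrier union disjoint S'_subset z] Kz by simp
  hence "?q \<bullet> (submatrix K S' S *\<^sub>v ?p) + ?q \<bullet> (principal_sub K S' *\<^sub>v ?q) = 0"
    using submatrix_carrier_mat[OF K_carrier S'_subset S_subset]
      submatrix_carrier_mat[OF K_carrier S'_subset S'_subset]
    by (metis restrict_vec_carrier mult_mat_vec_carrier scalar_prod_add_distrib scalar_prod_right_zero)
  hence "?q \<bullet> (principal_sub K S' *\<^sub>v ?q) = - (?p \<bullet> (?B *\<^sub>v ?q))"
    using submatrix_scalar_prod_swap[OF K_carrier K_sym S_subset S'_subset] by simp
  with principal_sub_form_bound[OF K_carrier S'_subset K_bound restrict_vec_carrier[of S' z]]
  have "c * (?q \<bullet> ?q) \<le> - (?p \<bullet> (?B *\<^sub>v ?q))" by simp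
  also have "\<dots> \<le> vnorm ?p * vnorm (?B *\<^sub>v ?q)"
    using abs_scalar_prod_le_vnorm[of ?p "card S" "?B *\<^sub>v ?q"] B by simp
  also have "\<dots> \<le> vnorm ?p * (spec_norm ?B * vnorm ?q)"
    by (rule mult_left_mono[OF vnorm_mult_le_spec_norm[OF B] vnorm_nonneg]) simp
  finally have "c * vnorm ?q ^ 2 \<le> vnorm ?q * (spec_norm ?B * vnorm ?p)"
    by (simp add: vnorm_square algebra_simps)
  then show ?thesis
    by (rule mult_le_if_mult_square_le[OF vnorm_nonneg
          mult_nonneg_nonneg[OF spec_norm_nonneg[OF B card_S'_pos] vnorm_nonneg]])
qed

lemma K_inv: "mat_inv K \<in> carrier_mat n n" "K * mat_inv K = 1\<^sub>m n"
  using mat_inv_inverse[OF K_carrier det_nonzero_if_form_bounded[OF K_carrier c_pos K_bound]]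
  by simp_all

lemma K_mult_mat_inv: "v \<in> carrier_vec n \<Longrightarrow> K *\<^sub>v (mat_inv K *\<^sub>v v) = v"
  using K_inv K_carrier by (simp flip: assoc_mult_mat_vec[of K n n])

lemma principal_sub_S: "principal_sub K S \<in> carrier_mat (card S) (card S)"
  and principal_sub_S_bound:
    "\<And>h. h \<in> carrier_vec (card S) \<Longrightarrow> c * (h \<bullet> h) \<le> h \<bullet> (principal_sub K S *\<^sub>v h)"
  using submatrix_carrier_mat[OF K_carrier S_subset S_subset]
    principal_sub_form_bound[OF K_carrier S_subset K_bound] by simp_all

lemma inv_principal_sub_diff_mult_vec:
  assumes u: "u \<in> carrier_vec (card S)"
  defines "z \<equiv> mat_inv K *\<^sub>v extend_vec S n u"
  shows "(mat_inv (principal_sub K S) - principal_sub (mat_inv K) S) *\<^sub>v u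
    = mat_inv (principal_sub K S) *\<^sub>v (submatrix K S S' *\<^sub>v restrict_vec S' z)"
proof -
  let ?A = "principal_sub K S" and ?B = "submatrix K S S'"
  let ?H = "mat_inv ?A" and ?p = "restrict_vec S z" and ?q = "restrict_vec S' z"
  note H = mat_inv_inverse[OF principal_sub_S
      det_nonzero_if_form_bounded[OF principal_sub_S c_pos principal_sub_S_bound]]
  have B: "?B \<in> carrier_mat (card S) (card S')"
    by (rule submatrix_carrier_mat[OF K_carrier S_subset S'_subset])
  have z: "z \<in> carrier_vec n" unfolding z_def using K_inv by simp
  have "K *\<^sub>v z = extend_vec S n u" unfolding z_def by (simp add: K_mult_mat_inv)
  hence "u = ?A *\<^sub>v ?p + ?B *\<^sub>v ?q"
    using restrict_mult_mat_vec_blocks[OF K_carrier union disjoint S_subset z]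
      restrict_extend_vec[OF S_subset u] by simp
  hence "?H *\<^sub>v u = ?H *\<^sub>v (?A *\<^sub>v ?p) + ?H *\<^sub>v (?B *\<^sub>v ?q)"
    using H principal_sub_S B by (metis mult_add_distrib_mat_vec mult_mat_vec_carrier restrict_vec_carrier)
  also have "?H *\<^sub>v (?A *\<^sub>v ?p) = ?p"
    using H principal_sub_S by (simp flip: assoc_mult_mat_vec[of ?H _ _ ?A])
  finally have "?H *\<^sub>v u = ?p + ?H *\<^sub>v (?B *\<^sub>v ?q)" .
  moreover have "principal_sub (mat_inv K) S *\<^sub>v u = ?p"
    unfolding z_def by (rule submatrix_mult_vec[OF K_inv(1) S_subset S_subset u])
  ultimately have "(?H - principal_sub (mat_inv K) S) *\<^sub>v u = (?p + ?H *\<^sub>v (?B *\<^sub>v ?q)) - ?p"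
    using H(1) u submatrix_carrier_mat[OF K_inv(1) S_subset S_subset]
    by (simp add: minus_mult_distrib_mat_vec)
  also have "\<dots> = ?H *\<^sub>v (?B *\<^sub>v ?q)"
    using H(1) B by (intro eq_vecI) auto
  finally show ?thesis .
qed

lemma vnorm_inv_principal_sub_diff_le:
  assumes u: "u \<in> carrier_vec (card S)"
  shows "c ^ 3 * vnorm ((mat_inv (principal_sub K S) - principal_sub (mat_inv K) S) *\<^sub>v u)
    \<le> spec_norm (submatrix K S S') ^ 2 * vnorm u"
proof -
  define z where "z = mat_inv K *\<^sub>v extend_vec S n u"
  let ?B = "submatrix K S S'" and ?p = "restrict_vec S z" and ?q = "restrict_vec S' z"
  let ?R = "mat_inv (principal_sub K S) - principal_sub (mat_inv K) S"
  have B: "?B \<in> carrier_mat (card S) (card S')"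
    by (rule submatrix_carrier_mat[OF K_carrier S_subset S'_subset])
  have nB: "0 \<le> spec_norm ?B" by (rule spec_norm_nonneg[OF B card_S'_pos])
  have z: "z \<in> carrier_vec n" unfolding z_def using K_inv by simp
  have Kz: "K *\<^sub>v z = extend_vec S n u" unfolding z_def by (simp add: K_mult_mat_inv)
  have "c * vnorm (?R *\<^sub>v u) \<le> vnorm (?B *\<^sub>v ?q)"
    unfolding inv_principal_sub_diff_mult_vec[OF u, folded z_def]
    by (rule vnorm_mat_inv_le[OF principal_sub_S c_pos principal_sub_S_bound
          mult_mat_vec_carrier[OF B restrict_vec_carrier]])
  also have "\<dots> \<le> spec_norm ?B * vnorm ?q" by (rule vnorm_mult_le_spec_norm[OF B]) simp
  finally have Ru: "c * vnorm (?R *\<^sub>v u) \<le> spec_norm ?B * vnorm ?q" .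
  have q: "c * vnorm ?q \<le> spec_norm ?B * vnorm ?p"
    using vnorm_restrict_complement_le[OF z] Kz
      restrict_extend_vec_disjoint[OF S'_subset disjoint] by simp
  have p: "c * vnorm ?p \<le> vnorm u" by (rule vnorm_restrict_le[OF z u Kz])
  have "c ^ 3 * vnorm (?R *\<^sub>v u) = c\<^sup>2 * (c * vnorm (?R *\<^sub>v u))"
    by (simp add: power3_eq_cube power2_eq_square)
  also have "\<dots> \<le> c * spec_norm ?B * (c * vnorm ?q)"
    using Ru c_pos by (simp add: power2_eq_square)
  also have "\<dots> \<le> c * spec_norm ?B * (spec_norm ?B * vnorm ?p)"
    using q c_pos nB by (simp add: mult_left_mono)
  also have "\<dots> = spec_norm ?B ^ 2 * (c * vnorm ?p)" by (simp add: power2_eq_square)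
  also have "\<dots> \<le> spec_norm ?B ^ 2 * vnorm u" using p by (simp add: mult_left_mono)
  finally show ?thesis .
qed

lemma spec_norm_inv_principal_sub_diff_le:
  "spec_norm (mat_inv (principal_sub K S) - principal_sub (mat_inv K) S)
    \<le> spec_norm (submatrix K S S') ^ 2 / c ^ 3"
proof (rule spec_norm_le[OF _ card_S_pos])
  show "mat_inv (principal_sub K S) - principal_sub (mat_inv K) S \<in> carrier_mat (card S) (card S)"
    by (rule minus_carrier_mat[OF submatrix_carrier_mat[OF K_inv(1) S_subset S_subset]])
  fix x assume "x \<in> carrier_vec (card S)" "vnorm x = 1"
  with vnorm_inv_principal_sub_diff_le[of x] c_pos
  show "vnorm ((mat_inv (principal_sub K S) - principal_sub (mat_inv K) S) *\<^sub>v x)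
      \<le> spec_norm (submatrix K S S') ^ 2 / c ^ 3"
    by (simp add: field_simps)
qed

end

theorem lemma1:
  fixes C :: "real mat" and N :: nat and S S' :: "nat set"
  assumes C: "C \<in> carrier_mat N N" "pos_def C"
    and part: "S \<union> S' = {0..<N}" "S \<inter> S' = {}" "S \<noteq> {}" "S' \<noteq> {}"
    and subpd: "pos_def (submatrix C S S)" "pos_def (submatrix C S' S')"
    and theta: "spec_norm (submatrix C S S') ^ 2
                  / (lambda_min (submatrix C S S) * lambda_min (submatrix C S' S')) < 1"
  shows "\<forall>lam::real. lam > 0 \<longrightarrow>
           spec_norm (R_S C S lam)
             \<le> spec_norm (submatrix C S S') ^ 2
                / ((1 - spec_norm (submatrix C S S') ^ 2
                        / (lambda_min (submatrix C S S) * lambda_min (submatrix C S' S')))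
                   * (lambda_min C + lam) ^ 3)"
proof (intro allI impI)
  fix lam :: real assume lam: "0 < lam"
  let ?b = "spec_norm (submatrix C S S')" and ?c = "lambda_min C + lam"
  let ?\<theta> = "?b ^ 2 / (lambda_min (submatrix C S S) * lambda_min (submatrix C S' S'))"
  have SN: "S \<subseteq> {0..<N}" "S' \<subseteq> {0..<N}" using part(1) by auto
  have card_pos: "0 < card S" "0 < card S'" "0 < N"
    using SN part(3,4) by (auto simp: card_gt_0_iff intro: finite_subset)
  have C_sym: "sym_mat C" using C(2) unfolding pos_def_def by simp
  have c: "0 < ?c" using lambda_min_pos[OF C card_pos(3)] lam by simp
  interpret form_bounded_partition "C + lam \<cdot>\<^sub>m 1\<^sub>m N" N ?c S S'
    using C(1) C_sym card_pos(3) c part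
    by unfold_locales (auto simp: sym_mat_add_smult_one lambda_min_shift_form_bound)
  have R: "spec_norm (R_S C S lam) \<le> ?b ^ 2 / ?c ^ 3"
    using spec_norm_inv_principal_sub_diff_le
    by (simp add: R_S_eq[OF C(1) SN(1)] submatrix_add_smult_one_disjoint[OF C(1) SN part(2)])
  have \<theta>: "0 \<le> ?\<theta>"
    using lambda_min_pos[OF submatrix_carrier_mat[OF C(1) SN(1) SN(1)] subpd(1) card_pos(1)]
      lambda_min_pos[OF submatrix_carrier_mat[OF C(1) SN(2) SN(2)] subpd(2) card_pos(2)] by simp
  show "spec_norm (R_S C S lam) \<le> ?b ^ 2 / ((1 - ?\<theta>) * ?c ^ 3)"
    using divide_le_divide_one_minus[OF zero_le_power2 zero_less_power[OF c] \<theta> theta]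
    by (rule order_trans[OF R])
qed

end
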